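(* As formal power series in $z$ with coefficients polynomials in $t$, \[ F(t,z)=\sum_{n\ge 0}\sum_{w\in S_n} t^{\operatorname{dep}(w)} z^n = \cfrac{1}{1 - \cfrac{z}{1 - \cfrac{tz}{1 - \cfrac{2tz}{1 - \cfrac{2t^2 z}{1 - \cfrac{3t^2 z}{1 - \cfrac{3t^3 z}{1-\cdots}}}}}}}, \] the $S$-fraction in which, numbering the partial numerators $c_0 z, c_1 z, c_2 z,\dots$ starting from $c_0 z = z$, one has $c_{2k}=(k+1)t^k$ and $c_{2k+1}=(k+1)t^{k+1}$ for all $k\ge 0$.
   Context: $S_0$ consists of the single empty permutation, of depth $0$. For $w\in S_n$, the depth is $\operatorname{dep}(w)=\sum_{i:\,w(i)>i}(w(i)-i)$, i.e. half the total displacement $\sum_{i=1}^n |w(i)-i|$. *)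

theory Defs
  imports "HOL-Combinatorics.Permutations"
    "HOL-Computational_Algebra.Formal_Power_Series"
    "HOL-Computational_Algebra.Fraction_Field"
    "HOL-Computational_Algebra.Polynomial"
begin

definition dep :: "nat \<Rightarrow> (nat \<Rightarrow> nat) \<Rightarrow> nat" where
  "dep n w = (\<Sum>i\<in>{1..n}. if w i > i then w i - i else 0)"

definition depPoly :: "nat \<Rightarrow> int poly" where
  "depPoly n = (\<Sum>w\<in>{w. w permutes {1..n}}. monom 1 (dep n w))"

(* embed polynomials in t into their fraction field, so that power series in z
   over it can be inverted *)
abbreviation emb :: "int poly \<Rightarrow> int poly fract" where
  "emb p \<equiv> Fract p 1"

definition F :: "int poly fract fps" where
  "F = Abs_fps (\<lambda>n. emb (depPoly n))"

definition cS :: "nat \<Rightarrow> int poly" where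
  "cS j = (if even j then monom (int (j div 2 + 1)) (j div 2)
                     else monom (int (j div 2 + 1)) (j div 2 + 1))"

fun Sfrac :: "(nat \<Rightarrow> int poly) \<Rightarrow> nat \<Rightarrow> nat \<Rightarrow> int poly fract fps" where
  "Sfrac c 0 k = 1"
| "Sfrac c (Suc m) k = inverse (1 - fps_const (emb (c k)) * fps_X * Sfrac c m (Suc k))"

end

theory Submission
  imports Defs
begin

text \<open>The truncated S-fractions stabilise coefficientwise, and their limits \<open>S k\<close> satisfy
  \<open>S k = 1 + c k z S (k + 1) S k\<close>. Contracting two levels at a time turns this into a
  three-term recurrence for rescaled products of the \<open>S k\<close> (a J-fraction), so the coefficients
  of \<open>S 0\<close> are weighted Motzkin path sums: from height \<open>h\<close> a step down, level or up weighs
  \<open>h\<^sup>2 t\<^sup>h\<close>, \<open>(2h + 1) t\<^sup>h\<close> or \<open>t\<^sup>h\<close>. On the other side, \<open>dep w\<close> counts the pairs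
  \<open>x \<le> j < w x\<close>, i.e. the arcs of \<open>w\<close> crossing each gap \<open>j, j + 1\<close>. Removing the positions
  \<open>n, n - 1, \<dots>\<close> one at a time while remembering the arcs that stay open gives the same
  recurrence, the height being the number of open arcs.\<close>

unbundle fps_syntax

section \<open>Limits of truncated S-fractions\<close>

definition fps_agree_upto :: "nat \<Rightarrow> 'a fps \<Rightarrow> 'a fps \<Rightarrow> bool" where
  "fps_agree_upto m A B \<longleftrightarrow> (\<forall>i\<le>m. A $ i = B $ i)"

lemma fps_agree_upto_refl: "fps_agree_upto m A A"
  by (simp add: fps_agree_upto_def)

lemma fps_agree_upto_sym: "fps_agree_upto m A B \<Longrightarrow> fps_agree_upto m B A"
  by (simp add: fps_agree_upto_def)

lemma fps_agree_upto_trans: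
  "fps_agree_upto m A B \<Longrightarrow> fps_agree_upto m B C \<Longrightarrow> fps_agree_upto m A C"
  by (simp add: fps_agree_upto_def)

lemma fps_agree_upto_mono: "fps_agree_upto m A B \<Longrightarrow> i \<le> m \<Longrightarrow> fps_agree_upto i A B"
  by (simp add: fps_agree_upto_def)

lemma fps_agree_upto_mult_left:
  "fps_agree_upto m A B \<Longrightarrow> fps_agree_upto m (C * A) (C * (B :: 'a::comm_ring_1 fps))"
  unfolding fps_agree_upto_def fps_mult_nth by (auto intro!: sum.cong)

lemma fps_agree_upto_mult_X:
  "fps_agree_upto m A B \<Longrightarrow> fps_agree_upto (Suc m) (fps_X * A) (fps_X * (B :: 'a::comm_ring_1 fps))"
  unfolding fps_agree_upto_def by (auto simp: fps_X_mult_nth)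

lemma fps_agree_upto_inverse:
  fixes A B :: "'a::field fps"
  assumes AB: "fps_agree_upto m A B" and A0: "A $ 0 \<noteq> 0"
  shows "fps_agree_upto m (inverse A) (inverse B)"
proof -
  have B0: "B $ 0 \<noteq> 0" using AB A0 by (auto simp: fps_agree_upto_def)
  have "fps_agree_upto m (inverse B * A) (inverse B * B)"
    using AB by (rule fps_agree_upto_mult_left)
  then have "fps_agree_upto m (inverse B * A) 1"
    using B0 by (simp add: inverse_mult_eq_1)
  then have "fps_agree_upto m (inverse A * (inverse B * A)) (inverse A * 1)"
    by (rule fps_agree_upto_mult_left)
  moreover have "inverse A * (inverse B * A) = inverse B"
    using A0 by (metis mult.left_commute inverse_mult_eq_1 mult_1_right)
  ultimately show ?thesis
    by (simp add: fps_agree_upto_sym)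
qed

lemma fps_agree_upto_Sfrac_step:
  fixes A B :: "'a::field fps"
  assumes "fps_agree_upto m A B"
  shows "fps_agree_upto (Suc m) (inverse (1 - fps_const e * fps_X * A))
                                (inverse (1 - fps_const e * fps_X * B))"
proof -
  have "fps_agree_upto (Suc m) (fps_const e * (fps_X * A)) (fps_const e * (fps_X * B))"
    using assms by (intro fps_agree_upto_mult_left fps_agree_upto_mult_X)
  then have "fps_agree_upto (Suc m) (1 - fps_const e * fps_X * A) (1 - fps_const e * fps_X * B)"
    by (simp add: fps_agree_upto_def mult.assoc)
  then show ?thesis
    by (rule fps_agree_upto_inverse) simp
qed

lemma Sfrac_nth_0 [simp]: "Sfrac c m k $ 0 = 1"
  by (cases m) auto

lemma Sfrac_agree_upto_Suc: "fps_agree_upto m (Sfrac c m k) (Sfrac c (Suc m) k)"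
proof (induction m arbitrary: k)
  case 0
  then show ?case by (simp add: fps_agree_upto_def)
next
  case (Suc m)
  then show ?case by (simp add: fps_agree_upto_Sfrac_step)
qed

lemma Sfrac_agree_upto: "i \<le> m \<Longrightarrow> fps_agree_upto i (Sfrac c i k) (Sfrac c m k)"
proof (induction m rule: dec_induct)
  case base
  then show ?case by (rule fps_agree_upto_refl)
next
  case (step m)
  then show ?case
    by (meson fps_agree_upto_mono fps_agree_upto_trans Sfrac_agree_upto_Suc)
qed

definition Sfrac_lim :: "(nat \<Rightarrow> int poly) \<Rightarrow> nat \<Rightarrow> int poly fract fps" where
  "Sfrac_lim c k = Abs_fps (\<lambda>i. Sfrac c i k $ i)"

lemma Sfrac_lim_agree_upto: "fps_agree_upto m (Sfrac_lim c k) (Sfrac c m k)"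
  using Sfrac_agree_upto by (simp add: fps_agree_upto_def Sfrac_lim_def)

lemma Sfrac_tendsto_Sfrac_lim: "(\<lambda>m. Sfrac c m k) \<longlonglongrightarrow> Sfrac_lim c k"
proof (rule tendsto_fpsI)
  fix n
  show "eventually (\<lambda>m. Sfrac c m k $ n = Sfrac_lim c k $ n) sequentially"
    using eventually_ge_at_top[of n]
    by eventually_elim (use Sfrac_lim_agree_upto in \<open>auto simp: fps_agree_upto_def\<close>)
qed

lemma Sfrac_lim_eq_inverse:
  "Sfrac_lim c k = inverse (1 - fps_const (emb (c k)) * fps_X * Sfrac_lim c (Suc k))"
proof (rule fps_ext)
  fix n
  show "Sfrac_lim c k $ n = inverse (1 - fps_const (emb (c k)) * fps_X * Sfrac_lim c (Suc k)) $ n"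
  proof (cases n)
    case 0
    then show ?thesis by (simp add: Sfrac_lim_def)
  next
    case (Suc m)
    have "fps_agree_upto n (inverse (1 - fps_const (emb (c k)) * fps_X * Sfrac_lim c (Suc k)))
                           (Sfrac c n k)"
      unfolding Suc Sfrac.simps by (intro fps_agree_upto_Sfrac_step Sfrac_lim_agree_upto)
    then show ?thesis
      by (simp add: fps_agree_upto_def Sfrac_lim_def)
  qed
qed

lemma Sfrac_lim_rec:
  "Sfrac_lim c k = 1 + fps_const (emb (c k)) * fps_X * Sfrac_lim c (Suc k) * Sfrac_lim c k"
proof -
  let ?D = "1 - fps_const (emb (c k)) * fps_X * Sfrac_lim c (Suc k)"
  have "?D * Sfrac_lim c k = 1"
    by (subst Sfrac_lim_eq_inverse) (simp add: inverse_mult_eq_1')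
  then show ?thesis
    by (simp add: algebra_simps)
qed

section \<open>Contraction to a three-term recurrence\<close>

lemma S_fraction_contraction:
  fixes f c :: "nat \<Rightarrow> 'a::comm_ring_1"
  assumes f: "\<And>i. f i = 1 + c i * X * f (Suc i) * f i"
  defines "Q h \<equiv> \<Prod>i\<le>2*h. f i"
  shows "Q h = (if h = 0 then 1 else Q (h - 1))
             + ((if h = 0 then 0 else c (2*h - 1)) + c (2*h)) * X * Q h
             + c (2*h) * c (Suc (2*h)) * X\<^sup>2 * Q (Suc h)"
proof (cases h)
  case 0
  have "Q 0 - (1 + c 0 * X * Q 0 + c 0 * c 1 * X\<^sup>2 * Q 1)
        = (f 0 - (1 + c 0 * X * f 1 * f 0)) + (f 1 - (1 + c 1 * X * f 2 * f 1)) * (c 0 * X * f 0)"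
    by (simp add: Q_def numeral_2_eq_2 algebra_simps power2_eq_square)
  also have "\<dots> = 0"
    using f[of 0] f[of 1] by (simp add: numeral_2_eq_2)
  finally show ?thesis using 0 by simp
next
  case (Suc k)
  define i where "i = Suc (2*k)"
  have Q_Suc: "Q (Suc k) = Q k * (f i * f (Suc i))"
    and Q_Suc2: "Q (Suc (Suc k)) = Q (Suc k) * (f (Suc (Suc i)) * f (Suc (Suc (Suc i))))"
    by (simp_all add: Q_def i_def mult.assoc)
  have "Q (Suc k) - (Q k + (c i + c (Suc i)) * X * Q (Suc k)
                     + c (Suc i) * c (Suc (Suc i)) * X\<^sup>2 * Q (Suc (Suc k)))
        = Q k * ((f (Suc i) - (1 + c (Suc i) * X * f (Suc (Suc i)) * f (Suc i))) * f i
          + (f (Suc (Suc i)) - (1 + c (Suc (Suc i)) * X * f (Suc (Suc (Suc i))) * f (Suc (Suc i))))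
            * (c (Suc i) * X * f i * f (Suc i))
          + (f i - (1 + c i * X * f (Suc i) * f i)))"
    unfolding Q_Suc2 Q_Suc by (simp add: algebra_simps power2_eq_square)
  also have "\<dots> = 0"
    using f[of i] f[of "Suc i"] f[of "Suc (Suc i)"] by simp
  finally show ?thesis
    using Suc by (simp add: i_def)
qed

lemma three_term_rescale:
  fixes Q \<nu> \<beta> \<rho> l :: "nat \<Rightarrow> 'a::comm_ring_1"
  assumes Q: "\<And>h. Q h = (if h = 0 then 1 else Q (h - 1)) + \<beta> h * X * Q h + l h * X\<^sup>2 * Q (Suc h)"
    and \<nu>0: "\<nu> 0 = 0" and l: "\<And>h. l h = \<nu> (Suc h) * \<rho> h"
  defines "A h \<equiv> (\<Prod>i=1..h. \<nu> i) * X ^ h * Q h"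
  shows "A h = (if h = 0 then 1 else 0) + X * (\<nu> h * A (h - 1) + \<beta> h * A h + \<rho> h * A (Suc h))"
proof (cases h)
  case 0
  have "A 0 = 1 + \<beta> 0 * X * Q 0 + \<nu> 1 * \<rho> 0 * X\<^sup>2 * Q 1"
    using Q[of 0] l[of 0] by (simp add: A_def)
  then show ?thesis
    using 0 \<nu>0 by (simp add: A_def algebra_simps power2_eq_square)
next
  case (Suc k)
  let ?\<mu> = "\<Prod>i=1..k. \<nu> i"
  have "A (Suc k) = ?\<mu> * \<nu> (Suc k) * X ^ Suc k * Q (Suc k)"
    by (simp add: A_def prod.cl_ivl_Suc)
  also have "\<dots> = ?\<mu> * \<nu> (Suc k) * X ^ Suc k
                     * (Q k + \<beta> (Suc k) * X * Q (Suc k) + \<nu> (Suc (Suc k)) * \<rho> (Suc k) * X\<^sup>2 * Q (Suc (Suc k)))"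
    using Q[of "Suc k"] l[of "Suc k"] by simp
  also have "\<dots> = X * (\<nu> (Suc k) * A k + \<beta> (Suc k) * A (Suc k) + \<rho> (Suc k) * A (Suc (Suc k)))"
    by (simp add: A_def prod.cl_ivl_Suc algebra_simps power2_eq_square)
  finally show ?thesis
    using Suc by simp
qed

text \<open>The sum of the weights of all paths of length \<open>n\<close> from height \<open>h\<close> down to height \<open>0\<close>,
  a step from height \<open>h\<close> down, level or up having weight \<open>\<nu> h\<close>, \<open>\<beta> h\<close> or \<open>\<rho> h\<close>.\<close>

fun motzkin_sum :: "(nat \<Rightarrow> 'a) \<Rightarrow> (nat \<Rightarrow> 'a) \<Rightarrow> (nat \<Rightarrow> 'a) \<Rightarrow> nat \<Rightarrow> nat \<Rightarrow> 'a::comm_semiring_1"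
  where
    "motzkin_sum \<nu> \<beta> \<rho> 0 h = (if h = 0 then 1 else 0)"
  | "motzkin_sum \<nu> \<beta> \<rho> (Suc n) h =
       \<nu> h * motzkin_sum \<nu> \<beta> \<rho> n (h - 1) + \<beta> h * motzkin_sum \<nu> \<beta> \<rho> n h
       + \<rho> h * motzkin_sum \<nu> \<beta> \<rho> n (Suc h)"

lemma fps_nth_three_term_rec:
  fixes A :: "nat \<Rightarrow> 'a::comm_ring_1 fps"
  assumes A: "\<And>h. A h = (if h = 0 then 1 else 0)
      + fps_X * (fps_const (\<nu> h) * A (h - 1) + fps_const (\<beta> h) * A h + fps_const (\<rho> h) * A (Suc h))"
  shows "A h $ n = motzkin_sum \<nu> \<beta> \<rho> n h"
proof (induction n arbitrary: h)
  case 0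
  show ?case by (subst A) simp
next
  case (Suc n)
  show ?case by (subst A) (simp add: fps_X_mult_nth Suc.IH)
qed

lemma motzkin_sum_Fract:
  "Fract (motzkin_sum \<nu> \<beta> \<rho> n h) 1
     = motzkin_sum (\<lambda>h. Fract (\<nu> h) 1) (\<lambda>h. Fract (\<beta> h) 1) (\<lambda>h. Fract (\<rho> h) 1) n h"
proof (induction n arbitrary: h)
  case 0
  show ?case by (simp add: One_fract_def Zero_fract_def)
next
  case (Suc n)
  show ?case by (simp only: motzkin_sum.simps flip: Suc.IH) simp
qed

theorem S_fraction_nth_motzkin_sum:
  fixes S :: "nat \<Rightarrow> 'a::comm_ring_1 fps" and d \<nu> \<beta> \<rho> :: "nat \<Rightarrow> 'a"
  assumes S: "\<And>i. S i = 1 + fps_const (d i) * fps_X * S (Suc i) * S i"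
    and \<nu>0: "\<nu> 0 = 0"
    and \<beta>: "\<And>h. \<beta> h = (if h = 0 then 0 else d (2*h - 1)) + d (2*h)"
    and \<nu>\<rho>: "\<And>h. d (2*h) * d (Suc (2*h)) = \<nu> (Suc h) * \<rho> h"
  shows "S 0 $ n = motzkin_sum \<nu> \<beta> \<rho> n 0"
proof -
  define Q where "Q h = (\<Prod>i\<le>2*h. S i)" for h
  define A where "A h = (\<Prod>i=1..h. fps_const (\<nu> i)) * fps_X ^ h * Q h" for h
  have \<beta>': "(if h = 0 then 0 else fps_const (d (2*h - 1))) + fps_const (d (2*h)) = fps_const (\<beta> h)"
    for h by (simp add: \<beta>)
  have "Q h = (if h = 0 then 1 else Q (h - 1)) + fps_const (\<beta> h) * fps_X * Q h
            + fps_const (d (2*h)) * fps_const (d (Suc (2*h))) * fps_X\<^sup>2 * Q (Suc h)" for h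
    using S_fraction_contraction[of S "\<lambda>i. fps_const (d i)" fps_X h, OF S, folded Q_def]
    unfolding \<beta>' .
  then have "A h = (if h = 0 then 1 else 0)
      + fps_X * (fps_const (\<nu> h) * A (h - 1) + fps_const (\<beta> h) * A h + fps_const (\<rho> h) * A (Suc h))" for h
    unfolding A_def by (rule three_term_rescale) (simp add: \<nu>0, metis \<nu>\<rho> fps_const_mult)
  then have "A 0 $ n = motzkin_sum \<nu> \<beta> \<rho> n 0"
    by (rule fps_nth_three_term_rec)
  then show ?thesis
    by (simp add: A_def Q_def)
qed

definition depth_motzkin :: "nat \<Rightarrow> nat \<Rightarrow> int poly" where
  "depth_motzkin = motzkin_sum (\<lambda>h. monom (int (h * h)) h) (\<lambda>h. monom (int (2*h + 1)) h) (\<lambda>h. monom 1 h)"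

section \<open>Arcs of permutations\<close>

lemma bij_betw_remove: "bij_betw f A B \<Longrightarrow> a \<in> A \<Longrightarrow> bij_betw f (A - {a}) (B - {f a})"
  by (rule bij_betw_DiffI) (auto simp: bij_betw_def)

lemma bij_betw_insert_fun_upd:
  "bij_betw f A B \<Longrightarrow> a \<notin> A \<Longrightarrow> b \<notin> B \<Longrightarrow> bij_betw (f(a := b)) (insert a A) (insert b B)"
  unfolding bij_betw_def inj_on_def by (auto simp: image_def)

lemma sum_unique_relation:
  assumes "finite S" "finite B" "\<And>f. f \<in> S \<Longrightarrow> \<exists>!b. b \<in> B \<and> R f b"
  shows "(\<Sum>b\<in>B. \<Sum>f\<in>{f\<in>S. R f b}. g f) = (\<Sum>f\<in>S. g f)"
proof -
  have "(\<Sum>b\<in>B. \<Sum>f\<in>{f\<in>S. R f b}. g f) = (\<Sum>f\<in>S. \<Sum>b\<in>{b\<in>B. R f b}. g f)"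
    using sum.swap_restrict[OF assms(1,2), of "\<lambda>f b. g f" R] by simp
  also have "\<dots> = (\<Sum>f\<in>S. g f)"
  proof (rule sum.cong[OF refl])
    fix f assume "f \<in> S"
    then obtain b where "{b\<in>B. R f b} = {b}" using assms(3) by blast
    then show "(\<Sum>b\<in>{b\<in>B. R f b}. g f) = g f" by simp
  qed
  finally show ?thesis .
qed

lemma sum_unique_relation2:
  assumes "finite S" "finite A" "finite B"
    and "\<And>f. f \<in> S \<Longrightarrow> \<exists>!a. a \<in> A \<and> R f a" and "\<And>f. f \<in> S \<Longrightarrow> \<exists>!b. b \<in> B \<and> R' f b"
  shows "(\<Sum>a\<in>A. \<Sum>b\<in>B. \<Sum>f\<in>{f\<in>S. R f a \<and> R' f b}. g f) = (\<Sum>f\<in>S. g f)"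
proof -
  have "(\<Sum>b\<in>B. \<Sum>f\<in>{f\<in>S. R f a \<and> R' f b}. g f) = (\<Sum>f\<in>{f\<in>S. R f a}. g f)" for a
  proof -
    have "{f\<in>{f\<in>S. R f a}. R' f b} = {f\<in>S. R f a \<and> R' f b}" for b
      by auto
    moreover have "(\<Sum>b\<in>B. \<Sum>f\<in>{f\<in>{f\<in>S. R f a}. R' f b}. g f) = (\<Sum>f\<in>{f\<in>S. R f a}. g f)"
    proof (rule sum_unique_relation[OF _ assms(3)])
      show "finite {f\<in>S. R f a}" using assms(1) by simp
      show "\<exists>!b. b \<in> B \<and> R' f b" if "f \<in> {f\<in>S. R f a}" for f
        using that by (intro assms(5)) simp
    qed
    ultimately show ?thesis
      by (simp only:)
  qed
  then have "(\<Sum>a\<in>A. \<Sum>b\<in>B. \<Sum>f\<in>{f\<in>S. R f a \<and> R' f b}. g f) = (\<Sum>a\<in>A. \<Sum>f\<in>{f\<in>S. R f a}. g f)"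
    by (rule sum.cong[OF refl])
  also have "\<dots> = (\<Sum>f\<in>S. g f)"
    by (rule sum_unique_relation[OF assms(1,2,4)])
  finally show ?thesis .
qed

text \<open>A pending bijection at level \<open>n\<close> consists of the arcs \<open>x \<mapsto> f x\<close> of a permutation
  having at least one end in \<open>{1..n}\<close>; \<open>P\<close> and \<open>V\<close> collect the ends of these arcs
  lying above \<open>n\<close>, as positions and as values respectively.\<close>

definition pending_bij :: "nat \<Rightarrow> nat set \<Rightarrow> nat set \<Rightarrow> (nat \<Rightarrow> nat) set" where
  "pending_bij n P V = {f. bij_betw f ({1..n} \<union> P) ({1..n} \<union> V) \<and> f ` P \<subseteq> {1..n}
     \<and> (\<forall>x. x \<notin> {1..n} \<union> P \<longrightarrow> f x = x)}"

definition admissible :: "nat \<Rightarrow> nat set \<Rightarrow> nat set \<Rightarrow> bool" where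
  "admissible n P V \<longleftrightarrow> finite P \<and> finite V \<and> P \<subseteq> {n<..} \<and> V \<subseteq> {n<..} \<and> card P = card V"

definition crossings :: "nat \<Rightarrow> (nat \<Rightarrow> nat) \<Rightarrow> nat" where
  "crossings n f = (\<Sum>j=1..n. card {x\<in>{1..j}. j < f x})"

definition pending_poly :: "nat \<Rightarrow> nat set \<Rightarrow> nat set \<Rightarrow> int poly" where
  "pending_poly n P V = (\<Sum>f\<in>pending_bij n P V. monom 1 (crossings n f))"

lemma finite_pending_bij:
  assumes "finite P" "finite V"
  shows "finite (pending_bij n P V)"
proof -
  let ?D = "{1..n} \<union> P" and ?R = "{1..n} \<union> V"
  have "inj_on (\<lambda>f. restrict f ?D) (pending_bij n P V)"
  proof (rule inj_onI)
    fix f g assume f: "f \<in> pending_bij n P V" and g: "g \<in> pending_bij n P V"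
      and fg: "restrict f ?D = restrict g ?D"
    show "f = g"
    proof
      fix x
      show "f x = g x"
        using f g fg unfolding pending_bij_def by (cases "x \<in> ?D") (auto dest: fun_cong[of _ _ x])
    qed
  qed
  moreover have "(\<lambda>f. restrict f ?D) ` pending_bij n P V \<subseteq> PiE ?D (\<lambda>_. ?R)"
  proof
    fix g assume "g \<in> (\<lambda>f. restrict f ?D) ` pending_bij n P V"
    then obtain f where f: "f \<in> pending_bij n P V" "g = restrict f ?D" by blast
    then have "f ` ?D \<subseteq> ?R"
      unfolding pending_bij_def bij_betw_def by blast
    then show "g \<in> PiE ?D (\<lambda>_. ?R)"
      using f(2) by (auto simp: restrict_PiE_iff)
  qed
  moreover have "finite (PiE ?D (\<lambda>_. ?R))"
    using assms by (intro finite_PiE) auto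
  ultimately show ?thesis
    by (meson finite_imageD finite_subset)
qed

lemma pending_bij_empty: "pending_bij n {} {} = {w. w permutes {1..n}}"
proof (intro set_eqI iffI)
  fix f assume "f \<in> pending_bij n {} {}"
  then have "bij_betw f {1..n} {1..n}" "\<And>x. x \<notin> {1..n} \<Longrightarrow> f x = x"
    unfolding pending_bij_def by auto
  then show "f \<in> {w. w permutes {1..n}}"
    by (auto intro: bij_imp_permutes)
next
  fix f assume "f \<in> {w. w permutes {1..n}}"
  then show "f \<in> pending_bij n {} {}"
    using permutes_imp_bij permutes_not_in unfolding pending_bij_def by fastforce
qed

lemma card_filter_eq_sum: "finite A \<Longrightarrow> card {x\<in>A. P x} = (\<Sum>x\<in>A. if P x then 1 else 0)"
  by (subst card_eq_sum) (rule sum.inter_filter)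

text \<open>Counting, for each \<open>x\<close>, the gaps \<open>j, j + 1\<close> with \<open>x \<le> j < w x\<close> gives \<open>w x - x\<close>.\<close>

lemma dep_eq_crossings:
  assumes w: "w permutes {1..n}"
  shows "dep n w = crossings n w"
proof -
  have "crossings n w = (\<Sum>j\<in>{1..n}. \<Sum>x\<in>{1..n}. if x \<le> j \<and> j < w x then 1 else 0)"
    unfolding crossings_def
  proof (rule sum.cong[OF refl])
    fix j assume "j \<in> {1..n}"
    then have "{x\<in>{1..j}. j < w x} = {x\<in>{1..n}. x \<le> j \<and> j < w x}" by auto
    then show "card {x\<in>{1..j}. j < w x} = (\<Sum>x\<in>{1..n}. if x \<le> j \<and> j < w x then 1 else 0)"
      using card_filter_eq_sum[of "{1..n}" "\<lambda>x. x \<le> j \<and> j < w x"] by simp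
  qed
  also have "\<dots> = (\<Sum>x\<in>{1..n}. \<Sum>j\<in>{1..n}. if x \<le> j \<and> j < w x then 1 else 0)"
    by (rule sum.swap)
  also have "\<dots> = (\<Sum>x\<in>{1..n}. if w x > x then w x - x else 0)"
  proof (rule sum.cong[OF refl])
    fix x assume x: "x \<in> {1..n}"
    then have "w x \<in> {1..n}" using permutes_in_image[OF w] by simp
    then have "{j\<in>{1..n}. x \<le> j \<and> j < w x} = {x..<w x}" using x by auto
    then show "(\<Sum>j\<in>{1..n}. if x \<le> j \<and> j < w x then 1 else 0) = (if w x > x then w x - x else 0)"
      using card_filter_eq_sum[of "{1..n}" "\<lambda>j. x \<le> j \<and> j < w x"] by simp
  qed
  finally show ?thesis
    by (simp add: dep_def)
qed

lemma depPoly_eq_pending_poly: "depPoly n = pending_poly n {} {}"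
  unfolding depPoly_def pending_poly_def pending_bij_empty by (intro sum.cong) (auto simp: dep_eq_crossings)

lemma crossings_Suc: "crossings (Suc m) f = crossings m f + card {x\<in>{1..Suc m}. Suc m < f x}"
  by (simp add: crossings_def sum.cl_ivl_Suc)

lemma crossings_cong:
  assumes "\<And>x. x \<in> {1..m} \<Longrightarrow> f x = g x \<or> (m < f x \<and> m < g x)"
  shows "crossings m f = crossings m g"
  unfolding crossings_def
proof (rule sum.cong[OF refl])
  fix j assume "j \<in> {1..m}"
  have "{x\<in>{1..j}. j < f x} = {x\<in>{1..j}. j < g x}"
  proof (intro Collect_cong conj_cong refl)
    fix x assume "x \<in> {1..j}"
    then show "j < f x \<longleftrightarrow> j < g x"
      using assms[of x] \<open>j \<in> {1..m}\<close> by auto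
  qed
  then show "card {x\<in>{1..j}. j < f x} = card {x\<in>{1..j}. j < g x}" by simp
qed

lemma card_arcs_above:
  assumes "admissible n P V" "f \<in> pending_bij n P V"
  shows "card {x\<in>{1..n}. n < f x} = card V"
proof -
  let ?D = "{1..n} \<union> P" and ?Z = "{x\<in>{1..n}. n < f x}"
  from assms have bij: "bij_betw f ?D ({1..n} \<union> V)" and fP: "f ` P \<subseteq> {1..n}"
    and V: "V \<subseteq> {n<..}" unfolding pending_bij_def admissible_def by auto
  have "f ` ?Z = V"
  proof
    show "f ` ?Z \<subseteq> V"
    proof
      fix y assume "y \<in> f ` ?Z"
      then obtain x where x: "x \<in> ?Z" "y = f x" by blast
      then have "f x \<in> {1..n} \<union> V"
        using bij_betw_apply[OF bij] by blast
      then show "y \<in> V" using x by auto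
    qed
    show "V \<subseteq> f ` ?Z"
    proof
      fix v assume v: "v \<in> V"
      then obtain x where x: "x \<in> ?D" "f x = v"
        using bij unfolding bij_betw_def by (metis UnCI imageE)
      have "x \<notin> P" using fP x v V by force
      then show "v \<in> f ` ?Z" using x v V by force
    qed
  qed
  moreover have "inj_on f ?Z"
    using bij_betw_imp_inj_on[OF bij] by (rule inj_on_subset) auto
  ultimately show ?thesis
    using card_image by metis
qed

lemma unique_preimage_above:
  assumes "f \<in> pending_bij n P V" "v \<in> V" "v \<notin> {1..n}"
  shows "\<exists>!x. x \<in> {1..n} \<and> f x = v"
proof -
  have bij: "bij_betw f ({1..n} \<union> P) ({1..n} \<union> V)" and fP: "f ` P \<subseteq> {1..n}"
    using assms(1) unfolding pending_bij_def by auto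
  obtain x where x: "x \<in> {1..n} \<union> P" "f x = v"
    using bij assms(2) unfolding bij_betw_def by (metis UnCI imageE)
  have "x \<in> {1..n}"
    using x fP assms(3) by blast
  moreover have "y = x" if "y \<in> {1..n}" "f y = v" for y
    using inj_onD[OF bij_betw_imp_inj_on[OF bij], of y x] that x by (metis UnI1)
  ultimately show ?thesis
    using x(2) by blast
qed

lemma sum_sum_Un_disjoint:
  assumes "finite A" "finite A'" "finite B" "finite B'" "A \<inter> A' = {}" "B \<inter> B' = {}"
  shows "(\<Sum>a\<in>A \<union> A'. \<Sum>b\<in>B \<union> B'. g a b)
       = (\<Sum>a\<in>A. \<Sum>b\<in>B. g a b) + (\<Sum>a\<in>A. \<Sum>b\<in>B'. g a b)
         + (\<Sum>a\<in>A'. \<Sum>b\<in>B. g a b) + (\<Sum>a\<in>A'. \<Sum>b\<in>B'. g a b)"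
  using assms by (simp add: sum.union_disjoint sum.distrib add_ac)

section \<open>Removing the last position\<close>

locale pending_step =
  fixes m :: nat and P V :: "nat set"
  assumes admissible: "admissible (Suc m) P V"
begin

lemma finite_P: "finite P" and finite_V: "finite V" and card_P: "card P = card V"
  and P_above: "p \<in> P \<Longrightarrow> Suc m < p" and V_above: "v \<in> V \<Longrightarrow> Suc m < v"
  using admissible by (auto simp: admissible_def)

lemma Suc_notin_dom: "Suc m \<notin> {1..m} \<union> P" and Suc_notin_ran: "Suc m \<notin> {1..m} \<union> V"
  using P_above V_above by auto

lemma pending_bij_Suc_iff:
  "f \<in> pending_bij (Suc m) P V \<longleftrightarrow>
     bij_betw f (insert (Suc m) ({1..m} \<union> P)) (insert (Suc m) ({1..m} \<union> V))
     \<and> f ` P \<subseteq> {1..Suc m} \<and> (\<forall>x. x \<notin> insert (Suc m) ({1..m} \<union> P) \<longrightarrow> f x = x)"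
proof -
  have "{1..Suc m} \<union> P = insert (Suc m) ({1..m} \<union> P)" "{1..Suc m} \<union> V = insert (Suc m) ({1..m} \<union> V)"
    by auto
  then show ?thesis
    unfolding pending_bij_def mem_Collect_eq by (simp only:)
qed

lemma pending_bij_Suc_inj:
  assumes "f \<in> pending_bij (Suc m) P V" "x \<in> insert (Suc m) ({1..m} \<union> P)"
    "y \<in> insert (Suc m) ({1..m} \<union> P)" "f x = f y"
  shows "x = y"
  using assms unfolding pending_bij_Suc_iff bij_betw_def inj_on_def by blast

lemma pending_bij_Suc_image_P:
  assumes f: "f \<in> pending_bij (Suc m) P V" and f_b: "f b = Suc m"
    and b: "b \<in> insert (Suc m) ({1..m} \<union> P)" and q: "q \<in> P" "q \<noteq> b"
  shows "f q \<in> {1..m}"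
proof -
  have "f q \<noteq> Suc m"
    using pending_bij_Suc_inj[OF f, of q b] f_b b q by auto
  moreover have "f q \<in> {1..Suc m}"
    using f q unfolding pending_bij_Suc_iff by auto
  ultimately show ?thesis
    by auto
qed

lemma pending_bij_fixes_Suc:
  assumes "g \<in> pending_bij m P V"
  shows "g (Suc m) = Suc m"
    and "bij_betw g (insert (Suc m) ({1..m} \<union> P)) (insert (Suc m) ({1..m} \<union> V))"
proof -
  show g_Suc: "g (Suc m) = Suc m"
    using assms Suc_notin_dom unfolding pending_bij_def by auto
  have "bij_betw (g(Suc m := Suc m)) (insert (Suc m) ({1..m} \<union> P)) (insert (Suc m) ({1..m} \<union> V))"
    using assms Suc_notin_dom Suc_notin_ran unfolding pending_bij_def
    by (intro bij_betw_insert_fun_upd) auto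
  then show "bij_betw g (insert (Suc m) ({1..m} \<union> P)) (insert (Suc m) ({1..m} \<union> V))"
    using g_Suc by (simp add: fun_upd_idem)
qed

text \<open>The gap after \<open>Suc m\<close> is crossed by exactly \<open>card V\<close> arcs, and the gaps up to \<open>m\<close>
  only see whether an arc from \<open>{1..m}\<close> ends above \<open>m\<close>.\<close>

lemma monom_crossings_Suc:
  assumes f: "f \<in> pending_bij (Suc m) P V"
    and fg: "\<And>x. x \<in> {1..m} \<Longrightarrow> f x = g x \<or> (m < f x \<and> m < g x)"
  shows "monom 1 (crossings (Suc m) f) = monom 1 (card V) * monom (1::int) (crossings m g)"
proof -
  have "crossings (Suc m) f = crossings m g + card V"
    using crossings_Suc[of m f] card_arcs_above[OF admissible f] crossings_cong[of m f g, OF fg]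
    by simp
  then show ?thesis
    by (simp add: mult_monom add.commute)
qed

lemma sum_crossings_reindex:
  assumes T: "T \<subseteq> pending_bij (Suc m) P V"
    and ji: "\<And>f. f \<in> T \<Longrightarrow> j (i f) = f" and i: "\<And>f. f \<in> T \<Longrightarrow> i f \<in> T'"
    and ij: "\<And>g. g \<in> T' \<Longrightarrow> i (j g) = g" and j: "\<And>g. g \<in> T' \<Longrightarrow> j g \<in> T"
    and agree: "\<And>f x. f \<in> T \<Longrightarrow> x \<in> {1..m} \<Longrightarrow> f x = i f x \<or> (m < f x \<and> m < i f x)"
  shows "(\<Sum>f\<in>T. monom 1 (crossings (Suc m) f))
           = monom 1 (card V) * (\<Sum>g\<in>T'. monom (1::int) (crossings m g))"
  unfolding sum_distrib_left
proof (rule sum.reindex_bij_witness[of T j i])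
  fix f assume f: "f \<in> T"
  show "j (i f) = f" "i f \<in> T'"
    using f ji i by auto
  show "monom 1 (card V) * monom 1 (crossings m (i f)) = monom (1::int) (crossings (Suc m) f)"
    using f T agree by (intro monom_crossings_Suc[symmetric]) auto
qed (use ij j in auto)

lemma pending_bij_Suc_fixed: "{f\<in>pending_bij (Suc m) P V. f (Suc m) = Suc m} = pending_bij m P V"
proof (intro set_eqI iffI)
  fix f assume "f \<in> {f\<in>pending_bij (Suc m) P V. f (Suc m) = Suc m}"
  then have f: "f \<in> pending_bij (Suc m) P V" and f_Suc: "f (Suc m) = Suc m"
    by auto
  have "bij_betw f ({1..m} \<union> P) ({1..m} \<union> V)"
    using bij_betw_remove[of f, OF f[unfolded pending_bij_Suc_iff, THEN conjunct1], of "Suc m"]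
      f_Suc Suc_notin_dom Suc_notin_ran by simp
  moreover have "f ` P \<subseteq> {1..m}"
    using pending_bij_Suc_image_P[OF f f_Suc] P_above by blast
  moreover have "\<forall>x. x \<notin> {1..m} \<union> P \<longrightarrow> f x = x"
    using f f_Suc unfolding pending_bij_Suc_iff by (metis insert_iff)
  ultimately show "f \<in> pending_bij m P V"
    by (simp add: pending_bij_def)
next
  fix g assume g: "g \<in> pending_bij m P V"
  then show "g \<in> {f\<in>pending_bij (Suc m) P V. f (Suc m) = Suc m}"
    using pending_bij_fixes_Suc[OF g] unfolding pending_bij_Suc_iff by (auto simp: pending_bij_def)
qed

lemma sum_fixed_Suc:
  "(\<Sum>f\<in>{f\<in>pending_bij (Suc m) P V. f (Suc m) = Suc m}. monom 1 (crossings (Suc m) f))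
     = monom 1 (card V) * pending_poly m P V"
  unfolding pending_poly_def pending_bij_Suc_fixed[symmetric]
  by (rule sum_crossings_reindex[where i = id and j = id]) auto

text \<open>Unless \<open>Suc m\<close> is a fixed point, it carries the arcs \<open>b \<mapsto> Suc m \<mapsto> a\<close>. When exactly one
  of \<open>a, b\<close> lies above \<open>m\<close> the two arcs are merged into \<open>b \<mapsto> a\<close>; when both do they are
  deleted, and when neither does they become open arcs with the end \<open>Suc m\<close> above level \<open>m\<close>.\<close>

definition arc_sum :: "nat \<Rightarrow> nat \<Rightarrow> int poly" where
  "arc_sum a b = (\<Sum>f\<in>{f\<in>pending_bij (Suc m) P V. f (Suc m) = a \<and> f b = Suc m}.
                    monom 1 (crossings (Suc m) f))"

lemma pending_bij_Suc_inner:
  assumes a: "a \<in> {1..m}" and b: "b \<in> {1..m}"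
  shows "{f\<in>pending_bij (Suc m) P V. f (Suc m) = a \<and> f b = Suc m}
       = {f\<in>pending_bij m (insert (Suc m) P) (insert (Suc m) V). f (Suc m) = a \<and> f b = Suc m}"
proof -
  have "{1..m} \<union> insert (Suc m) P = insert (Suc m) ({1..m} \<union> P)"
    and "{1..m} \<union> insert (Suc m) V = insert (Suc m) ({1..m} \<union> V)"
    by auto
  then have inner_iff: "f \<in> pending_bij m (insert (Suc m) P) (insert (Suc m) V) \<longleftrightarrow>
     bij_betw f (insert (Suc m) ({1..m} \<union> P)) (insert (Suc m) ({1..m} \<union> V))
     \<and> f ` insert (Suc m) P \<subseteq> {1..m} \<and> (\<forall>x. x \<notin> insert (Suc m) ({1..m} \<union> P) \<longrightarrow> f x = x)" for f
    unfolding pending_bij_def mem_Collect_eq by (simp only:)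
  have "f ` P \<subseteq> {1..m}" if f: "f \<in> pending_bij (Suc m) P V" and f_b: "f b = Suc m" for f
    using pending_bij_Suc_image_P[OF f f_b] b P_above by fastforce
  then show ?thesis
    using a unfolding inner_iff pending_bij_Suc_iff by auto
qed

lemma arc_sum_inner:
  assumes "a \<in> {1..m}" "b \<in> {1..m}"
  shows "arc_sum a b = monom 1 (card V) *
    (\<Sum>g\<in>{g\<in>pending_bij m (insert (Suc m) P) (insert (Suc m) V). g (Suc m) = a \<and> g b = Suc m}.
       monom 1 (crossings m g))"
  unfolding arc_sum_def pending_bij_Suc_inner[OF assms, symmetric]
  by (rule sum_crossings_reindex[where i = id and j = id]) auto

lemma pending_bij_transpose_down:
  assumes f: "f \<in> pending_bij (Suc m) P V" and f_Suc: "f (Suc m) = a" and f_b: "f b = Suc m"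
    and b: "b \<in> {1..m} \<union> P" and a: "b \<in> P \<Longrightarrow> a \<in> {1..m}"
  shows "f \<circ> transpose b (Suc m) \<in> pending_bij m P V"
proof -
  let ?t = "transpose b (Suc m)"
  have bij: "bij_betw (f \<circ> ?t) (insert (Suc m) ({1..m} \<union> P)) (insert (Suc m) ({1..m} \<union> V))"
    using f b unfolding pending_bij_Suc_iff
    by (intro bij_betw_trans[OF permutes_imp_bij[OF permutes_swap_id]]) auto
  have "bij_betw (f \<circ> ?t) ({1..m} \<union> P) ({1..m} \<union> V)"
    using bij_betw_remove[OF bij, of "Suc m"] f_b Suc_notin_dom Suc_notin_ran by simp
  moreover have "(f \<circ> ?t) q \<in> {1..m}" if q: "q \<in> P" for q
  proof (cases "q = b")
    case True
    then show ?thesis using a q f_Suc by simp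
  next
    case False
    moreover have "q \<noteq> Suc m"
      using P_above[OF q] by simp
    ultimately show ?thesis
      using pending_bij_Suc_image_P[OF f f_b _ q False] b by simp
  qed
  moreover have "(f \<circ> ?t) x = x" if x: "x \<notin> {1..m} \<union> P" for x
  proof (cases "x = Suc m")
    case True
    then show ?thesis using f_b by simp
  next
    case False
    then have "x \<noteq> b" "x \<notin> insert (Suc m) ({1..m} \<union> P)"
      using x b by auto
    then show ?thesis
      using f unfolding pending_bij_Suc_iff by simp
  qed
  ultimately show ?thesis
    by (auto simp: pending_bij_def)
qed

lemma pending_bij_transpose_up:
  assumes g: "g \<in> pending_bij m P V" and b: "b \<in> {1..m} \<union> P"
  shows "g \<circ> transpose b (Suc m) \<in> pending_bij (Suc m) P V"
proof -
  let ?t = "transpose b (Suc m)"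
  have "bij_betw (g \<circ> ?t) (insert (Suc m) ({1..m} \<union> P)) (insert (Suc m) ({1..m} \<union> V))"
    using pending_bij_fixes_Suc(2)[OF g] b
    by (intro bij_betw_trans[OF permutes_imp_bij[OF permutes_swap_id]]) auto
  moreover have "(g \<circ> ?t) ` P \<subseteq> {1..Suc m}"
  proof
    fix y assume "y \<in> (g \<circ> ?t) ` P"
    then obtain q where q: "q \<in> P" "y = (g \<circ> ?t) q" by blast
    show "y \<in> {1..Suc m}"
    proof (cases "q = b")
      case True
      then show ?thesis using q pending_bij_fixes_Suc(1)[OF g] by simp
    next
      case False
      then show ?thesis using q g P_above[OF q(1)] unfolding pending_bij_def by auto
    qed
  qed
  moreover have "(g \<circ> ?t) x = x" if "x \<notin> insert (Suc m) ({1..m} \<union> P)" for x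
  proof -
    have "x \<noteq> b" "x \<noteq> Suc m" "x \<notin> {1..m} \<union> P"
      using that b by auto
    then show ?thesis
      using g unfolding pending_bij_def by simp
  qed
  ultimately show ?thesis
    by (simp add: pending_bij_Suc_iff)
qed

lemma arc_sum_transpose:
  assumes b: "b \<in> {1..m} \<union> P" and a: "a \<in> {1..m} \<union> V" and ab: "b \<in> P \<longleftrightarrow> a \<in> {1..m}"
  shows "arc_sum a b = monom 1 (card V) * (\<Sum>g\<in>{g\<in>pending_bij m P V. g b = a}. monom 1 (crossings m g))"
  unfolding arc_sum_def
proof (rule sum_crossings_reindex[where i = "\<lambda>f. f \<circ> transpose b (Suc m)" and j = "\<lambda>f. f \<circ> transpose b (Suc m)"])
  have b_ne: "b \<noteq> Suc m"
    using b Suc_notin_dom by auto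
  fix f assume "f \<in> {f\<in>pending_bij (Suc m) P V. f (Suc m) = a \<and> f b = Suc m}"
  then have f: "f \<in> pending_bij (Suc m) P V" and f_Suc: "f (Suc m) = a" and f_b: "f b = Suc m"
    by auto
  show "f \<circ> transpose b (Suc m) \<circ> transpose b (Suc m) = f"
    by (simp add: comp_assoc)
  show "f \<circ> transpose b (Suc m) \<in> {g\<in>pending_bij m P V. g b = a}"
    using pending_bij_transpose_down[OF f f_Suc f_b b] ab f_Suc by simp
  fix x assume x: "x \<in> {1..m}"
  show "f x = (f \<circ> transpose b (Suc m)) x \<or> (m < f x \<and> m < (f \<circ> transpose b (Suc m)) x)"
  proof (cases "x = b")
    case True
    then have "a \<in> V" using x a ab P_above by fastforce
    then show ?thesis using True f_b f_Suc V_above by fastforce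
  next
    case False
    then show ?thesis using x by simp
  qed
next
  fix g assume "g \<in> {g\<in>pending_bij m P V. g b = a}"
  then have g: "g \<in> pending_bij m P V" and g_b: "g b = a"
    by auto
  show "g \<circ> transpose b (Suc m) \<circ> transpose b (Suc m) = g"
    by (simp add: comp_assoc)
  show "g \<circ> transpose b (Suc m) \<in> {f\<in>pending_bij (Suc m) P V. f (Suc m) = a \<and> f b = Suc m}"
    using pending_bij_transpose_up[OF g b] g_b pending_bij_fixes_Suc(1)[OF g] by simp
qed auto

lemma pending_bij_remove_arc:
  assumes f: "f \<in> pending_bij (Suc m) P V" and f_Suc: "f (Suc m) = a" and f_b: "f b = Suc m"
    and b: "b \<in> P" and a: "a \<in> V"
  shows "f(b := b, Suc m := Suc m) \<in> pending_bij m (P - {b}) (V - {a})"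
proof -
  let ?D = "insert (Suc m) ({1..m} \<union> P)" and ?R = "insert (Suc m) ({1..m} \<union> V)"
  have b_ne: "b \<noteq> Suc m" "b \<notin> {1..m}" and a_ne: "a \<noteq> Suc m" "a \<notin> {1..m}"
    using P_above[OF b] V_above[OF a] by auto
  have "bij_betw f (?D - {Suc m}) (?R - {f (Suc m)})"
    using f unfolding pending_bij_Suc_iff by (intro bij_betw_remove) auto
  then have "bij_betw f (?D - {Suc m} - {b}) (?R - {a} - {f b})"
    using b b_ne f_Suc by (intro bij_betw_remove) auto
  moreover have "?D - {Suc m} - {b} = {1..m} \<union> (P - {b})" "?R - {a} - {f b} = {1..m} \<union> (V - {a})"
    using Suc_notin_dom Suc_notin_ran a a_ne b b_ne f_b by auto
  ultimately have "bij_betw f ({1..m} \<union> (P - {b})) ({1..m} \<union> (V - {a}))"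
    by simp
  then have "bij_betw (f(b := b, Suc m := Suc m)) ({1..m} \<union> (P - {b})) ({1..m} \<union> (V - {a}))"
    by (rule bij_betw_cong[THEN iffD1, rotated]) (use b_ne Suc_notin_dom in auto)
  moreover have "f(b := b, Suc m := Suc m) ` (P - {b}) \<subseteq> {1..m}"
  proof
    fix y assume "y \<in> f(b := b, Suc m := Suc m) ` (P - {b})"
    then obtain q where q: "q \<in> P" "q \<noteq> b" "y = (f(b := b, Suc m := Suc m)) q" by blast
    moreover have "q \<noteq> Suc m"
      using P_above[OF q(1)] by simp
    ultimately show "y \<in> {1..m}"
      using pending_bij_Suc_image_P[OF f f_b _ q(1,2)] b by simp
  qed
  moreover have "(f(b := b, Suc m := Suc m)) x = x" if "x \<notin> {1..m} \<union> (P - {b})" for x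
    using f that unfolding pending_bij_Suc_iff by auto
  ultimately show ?thesis
    by (simp add: pending_bij_def)
qed

lemma pending_bij_insert_arc:
  assumes g: "g \<in> pending_bij m (P - {b}) (V - {a})" and b: "b \<in> P" and a: "a \<in> V"
  shows "g(b := Suc m, Suc m := a) \<in> pending_bij (Suc m) P V"
proof -
  let ?D' = "{1..m} \<union> (P - {b})" and ?R' = "{1..m} \<union> (V - {a})"
  have b_ne: "b \<noteq> Suc m" "b \<notin> {1..m}" and a_ne: "a \<noteq> Suc m" "a \<notin> {1..m}"
    using P_above[OF b] V_above[OF a] by auto
  have "bij_betw (g(b := Suc m)) (insert b ?D') (insert (Suc m) ?R')"
    by (rule bij_betw_insert_fun_upd) (use g b_ne Suc_notin_ran in \<open>auto simp: pending_bij_def\<close>)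
  then have "bij_betw (g(b := Suc m, Suc m := a)) (insert (Suc m) (insert b ?D')) (insert a (insert (Suc m) ?R'))"
    by (rule bij_betw_insert_fun_upd) (use b_ne a_ne Suc_notin_dom in auto)
  moreover have "insert (Suc m) (insert b ?D') = insert (Suc m) ({1..m} \<union> P)"
    "insert a (insert (Suc m) ?R') = insert (Suc m) ({1..m} \<union> V)"
    using a b by auto
  moreover have "g(b := Suc m, Suc m := a) ` P \<subseteq> {1..Suc m}"
  proof
    fix y assume "y \<in> g(b := Suc m, Suc m := a) ` P"
    then obtain q where q: "q \<in> P" "y = (g(b := Suc m, Suc m := a)) q" by blast
    show "y \<in> {1..Suc m}"
    proof (cases "q = b")
      case True
      then show ?thesis using q b_ne by simp
    next
      case False
      then show ?thesis using g q P_above[OF q(1)] unfolding pending_bij_def by auto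
    qed
  qed
  moreover have "(g(b := Suc m, Suc m := a)) x = x" if "x \<notin> insert (Suc m) ({1..m} \<union> P)" for x
  proof -
    have "x \<noteq> b" "x \<noteq> Suc m" "x \<notin> ?D'"
      using that b by auto
    then show ?thesis
      using g unfolding pending_bij_def by simp
  qed
  ultimately show ?thesis
    by (simp add: pending_bij_Suc_iff)
qed

lemma arc_sum_outer:
  assumes a: "a \<in> V" and b: "b \<in> P"
  shows "arc_sum a b = monom 1 (card V) * pending_poly m (P - {b}) (V - {a})"
  unfolding arc_sum_def pending_poly_def
proof (rule sum_crossings_reindex[where i = "\<lambda>f. f(b := b, Suc m := Suc m)" and j = "\<lambda>g. g(b := Suc m, Suc m := a)"])
  have b_ne: "b \<noteq> Suc m" "b \<notin> {1..m}"
    using P_above[OF b] by auto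
  fix f assume "f \<in> {f\<in>pending_bij (Suc m) P V. f (Suc m) = a \<and> f b = Suc m}"
  then have f: "f \<in> pending_bij (Suc m) P V" and f_Suc: "f (Suc m) = a" and f_b: "f b = Suc m"
    by auto
  show "f(b := b, Suc m := Suc m, b := Suc m, Suc m := a) = f"
    using f_Suc f_b by (auto simp: fun_eq_iff)
  show "f(b := b, Suc m := Suc m) \<in> pending_bij m (P - {b}) (V - {a})"
    by (rule pending_bij_remove_arc[OF f f_Suc f_b b a])
  fix x assume "x \<in> {1..m}"
  then show "f x = (f(b := b, Suc m := Suc m)) x \<or> (m < f x \<and> m < (f(b := b, Suc m := Suc m)) x)"
    using b_ne by auto
next
  have b_ne: "b \<noteq> Suc m"
    using P_above[OF b] by auto
  fix g assume g: "g \<in> pending_bij m (P - {b}) (V - {a})"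
  have "g b = b" "g (Suc m) = Suc m"
    using g P_above[OF b] Suc_notin_dom unfolding pending_bij_def by auto
  then show "g(b := Suc m, Suc m := a, b := b, Suc m := Suc m) = g"
    by (auto simp: fun_eq_iff)
  show "g(b := Suc m, Suc m := a) \<in> {f\<in>pending_bij (Suc m) P V. f (Suc m) = a \<and> f b = Suc m}"
    using pending_bij_insert_arc[OF g b a] b_ne by simp
qed auto

lemma pending_bij_Suc_arc_ends:
  assumes f: "f \<in> pending_bij (Suc m) P V" and f_Suc: "f (Suc m) \<noteq> Suc m"
  shows "f (Suc m) \<in> {1..m} \<union> V" and "\<exists>!b. b \<in> {1..m} \<union> P \<and> f b = Suc m"
proof -
  have bij: "bij_betw f (insert (Suc m) ({1..m} \<union> P)) (insert (Suc m) ({1..m} \<union> V))"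
    using f unfolding pending_bij_Suc_iff by blast
  then show "f (Suc m) \<in> {1..m} \<union> V"
    using f_Suc bij_betw_apply[OF bij, of "Suc m"] by simp
  obtain b where b: "b \<in> insert (Suc m) ({1..m} \<union> P)" "f b = Suc m"
    using bij unfolding bij_betw_def by (metis imageE insertI1)
  then have "b \<in> {1..m} \<union> P"
    using f_Suc by auto
  moreover have "c = b" if "c \<in> {1..m} \<union> P" "f c = Suc m" for c
    using pending_bij_Suc_inj[OF f, of c b] that b by simp
  ultimately show "\<exists>!b. b \<in> {1..m} \<union> P \<and> f b = Suc m"
    using b(2) by blast
qed

lemma sum_not_fixed_Suc:
  "(\<Sum>f\<in>{f\<in>pending_bij (Suc m) P V. f (Suc m) \<noteq> Suc m}. monom 1 (crossings (Suc m) f))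
     = (\<Sum>a\<in>{1..m} \<union> V. \<Sum>b\<in>{1..m} \<union> P. arc_sum a b)"
proof -
  let ?S = "{f\<in>pending_bij (Suc m) P V. f (Suc m) \<noteq> Suc m}"
  have "(\<Sum>f\<in>?S. monom 1 (crossings (Suc m) f))
      = (\<Sum>a\<in>{1..m} \<union> V. \<Sum>b\<in>{1..m} \<union> P. \<Sum>f\<in>{f\<in>?S. f (Suc m) = a \<and> f b = Suc m}.
           monom (1::int) (crossings (Suc m) f))"
  proof (rule sum_unique_relation2[symmetric])
    show "finite ?S"
      using finite_pending_bij[OF finite_P finite_V] by simp
    show "finite ({1..m} \<union> V)" "finite ({1..m} \<union> P)"
      using finite_P finite_V by simp_all
    fix f assume f: "f \<in> ?S"
    show "\<exists>!a. a \<in> {1..m} \<union> V \<and> f (Suc m) = a"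
      by (rule ex1I[of _ "f (Suc m)"]) (use f pending_bij_Suc_arc_ends(1) in auto)
    show "\<exists>!b. b \<in> {1..m} \<union> P \<and> f b = Suc m"
      using f by (intro pending_bij_Suc_arc_ends(2)) auto
  qed
  also have "\<dots> = (\<Sum>a\<in>{1..m} \<union> V. \<Sum>b\<in>{1..m} \<union> P. arc_sum a b)"
  proof (intro sum.cong refl)
    fix a b assume "a \<in> {1..m} \<union> V"
    then have "{f\<in>?S. f (Suc m) = a \<and> f b = Suc m}
             = {f\<in>pending_bij (Suc m) P V. f (Suc m) = a \<and> f b = Suc m}"
      using Suc_notin_ran by auto
    then show "(\<Sum>f\<in>{f\<in>?S. f (Suc m) = a \<and> f b = Suc m}. monom 1 (crossings (Suc m) f)) = arc_sum a b"
      by (simp add: arc_sum_def)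
  qed
  finally show ?thesis .
qed

lemma pending_poly_Suc_split:
  "pending_poly (Suc m) P V
     = monom 1 (card V) * pending_poly m P V + (\<Sum>a\<in>{1..m} \<union> V. \<Sum>b\<in>{1..m} \<union> P. arc_sum a b)"
proof -
  let ?S = "pending_bij (Suc m) P V" and ?w = "\<lambda>f. monom (1::int) (crossings (Suc m) f)"
  have "sum ?w ?S = sum ?w ({f\<in>?S. f (Suc m) = Suc m} \<union> {f\<in>?S. f (Suc m) \<noteq> Suc m})"
    by (rule arg_cong[where f = "sum ?w"]) auto
  also have "\<dots> = sum ?w {f\<in>?S. f (Suc m) = Suc m} + sum ?w {f\<in>?S. f (Suc m) \<noteq> Suc m}"
    using finite_pending_bij[OF finite_P finite_V] by (intro sum.union_disjoint) auto
  finally show ?thesis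
    unfolding pending_poly_def sum_fixed_Suc[unfolded pending_poly_def] sum_not_fixed_Suc .
qed

lemma sum_arc_sum_inner:
  "(\<Sum>a\<in>{1..m}. \<Sum>b\<in>{1..m}. arc_sum a b)
     = monom 1 (card V) * pending_poly m (insert (Suc m) P) (insert (Suc m) V)"
proof -
  let ?S = "pending_bij m (insert (Suc m) P) (insert (Suc m) V)"
  let ?W = "\<lambda>a b. \<Sum>g\<in>{g\<in>?S. g (Suc m) = a \<and> g b = Suc m}. monom 1 (crossings m g)"
  have "(\<Sum>a\<in>{1..m}. \<Sum>b\<in>{1..m}. arc_sum a b) = (\<Sum>a\<in>{1..m}. \<Sum>b\<in>{1..m}. monom 1 (card V) * ?W a b)"
    by (intro sum.cong refl arc_sum_inner)
  also have "\<dots> = monom 1 (card V) * (\<Sum>a\<in>{1..m}. \<Sum>b\<in>{1..m}. ?W a b)"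
    by (simp only: sum_distrib_left)
  also have "(\<Sum>a\<in>{1..m}. \<Sum>b\<in>{1..m}. ?W a b) = pending_poly m (insert (Suc m) P) (insert (Suc m) V)"
    unfolding pending_poly_def
  proof (rule sum_unique_relation2)
    show "finite ?S"
      using finite_P finite_V by (simp add: finite_pending_bij)
    fix g assume g: "g \<in> ?S"
    show "\<exists>!a. a \<in> {1..m} \<and> g (Suc m) = a"
      by (rule ex1I[of _ "g (Suc m)"]) (use g in \<open>auto simp: pending_bij_def\<close>)
    show "\<exists>!b. b \<in> {1..m} \<and> g b = Suc m"
      by (rule unique_preimage_above[OF g]) auto
  qed simp_all
  finally show ?thesis .
qed

lemma sum_arc_sum_from_P:
  "(\<Sum>a\<in>{1..m}. \<Sum>b\<in>P. arc_sum a b) = of_nat (card P) * (monom 1 (card V) * pending_poly m P V)"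
proof -
  let ?W = "\<lambda>a b. \<Sum>g\<in>{g\<in>pending_bij m P V. g b = a}. monom 1 (crossings m g)"
  have col: "(\<Sum>a\<in>{1..m}. arc_sum a b) = monom 1 (card V) * pending_poly m P V" if b: "b \<in> P" for b
  proof -
    have "(\<Sum>a\<in>{1..m}. arc_sum a b) = (\<Sum>a\<in>{1..m}. monom 1 (card V) * ?W a b)"
      using b P_above[OF b] by (intro sum.cong refl arc_sum_transpose) auto
    also have "\<dots> = monom 1 (card V) * (\<Sum>a\<in>{1..m}. ?W a b)"
      by (simp only: sum_distrib_left)
    also have "(\<Sum>a\<in>{1..m}. ?W a b) = pending_poly m P V"
      unfolding pending_poly_def
    proof (rule sum_unique_relation)
      show "finite (pending_bij m P V)"
        using finite_P finite_V by (rule finite_pending_bij)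
      fix g assume g: "g \<in> pending_bij m P V"
      show "\<exists>!a. a \<in> {1..m} \<and> g b = a"
        by (rule ex1I[of _ "g b"]) (use g b in \<open>auto simp: pending_bij_def\<close>)
    qed simp
    finally show ?thesis .
  qed
  have "(\<Sum>a\<in>{1..m}. \<Sum>b\<in>P. arc_sum a b) = (\<Sum>b\<in>P. \<Sum>a\<in>{1..m}. arc_sum a b)"
    by (rule sum.swap)
  also have "\<dots> = (\<Sum>b\<in>P. monom 1 (card V) * pending_poly m P V)"
    by (rule sum.cong[OF refl]) (rule col)
  finally show ?thesis
    by simp
qed

lemma sum_arc_sum_to_V:
  "(\<Sum>a\<in>V. \<Sum>b\<in>{1..m}. arc_sum a b) = of_nat (card V) * (monom 1 (card V) * pending_poly m P V)"
proof -
  let ?W = "\<lambda>a b. \<Sum>g\<in>{g\<in>pending_bij m P V. g b = a}. monom 1 (crossings m g)"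
  have "(\<Sum>b\<in>{1..m}. arc_sum a b) = monom 1 (card V) * pending_poly m P V" if a: "a \<in> V" for a
  proof -
    have "(\<Sum>b\<in>{1..m}. arc_sum a b) = (\<Sum>b\<in>{1..m}. monom 1 (card V) * ?W a b)"
      using a P_above V_above[OF a] by (intro sum.cong refl arc_sum_transpose) fastforce+
    also have "\<dots> = monom 1 (card V) * (\<Sum>b\<in>{1..m}. ?W a b)"
      by (simp only: sum_distrib_left)
    also have "(\<Sum>b\<in>{1..m}. ?W a b) = pending_poly m P V"
      unfolding pending_poly_def
    proof (rule sum_unique_relation)
      show "finite (pending_bij m P V)"
        using finite_P finite_V by (rule finite_pending_bij)
      fix g assume g: "g \<in> pending_bij m P V"
      show "\<exists>!b. b \<in> {1..m} \<and> g b = a"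
        by (rule unique_preimage_above[OF g a]) (use V_above[OF a] in auto)
    qed simp
    finally show ?thesis .
  qed
  then show ?thesis
    by simp
qed

lemma pending_poly_Suc:
  "pending_poly (Suc m) P V = monom 1 (card V) *
     (pending_poly m P V + (\<Sum>a\<in>V. \<Sum>b\<in>P. pending_poly m (P - {b}) (V - {a}))
      + of_nat (card V) * pending_poly m P V + of_nat (card P) * pending_poly m P V
      + pending_poly m (insert (Suc m) P) (insert (Suc m) V))"
proof -
  have "{1..m} \<inter> V = {}" "{1..m} \<inter> P = {}"
    using P_above V_above by force+
  then have "(\<Sum>a\<in>{1..m} \<union> V. \<Sum>b\<in>{1..m} \<union> P. arc_sum a b)
      = (\<Sum>a\<in>{1..m}. \<Sum>b\<in>{1..m}. arc_sum a b) + (\<Sum>a\<in>{1..m}. \<Sum>b\<in>P. arc_sum a b)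
        + (\<Sum>a\<in>V. \<Sum>b\<in>{1..m}. arc_sum a b) + (\<Sum>a\<in>V. \<Sum>b\<in>P. arc_sum a b)"
    using finite_P finite_V by (intro sum_sum_Un_disjoint) auto
  moreover have "(\<Sum>a\<in>V. \<Sum>b\<in>P. arc_sum a b)
      = monom 1 (card V) * (\<Sum>a\<in>V. \<Sum>b\<in>P. pending_poly m (P - {b}) (V - {a}))"
    unfolding sum_distrib_left by (intro sum.cong refl arc_sum_outer) auto
  ultimately show ?thesis
    unfolding pending_poly_Suc_split sum_arc_sum_inner sum_arc_sum_from_P sum_arc_sum_to_V
    by (simp add: algebra_simps)
qed

lemma admissible_same: "admissible m P V"
  and admissible_remove: "a \<in> V \<Longrightarrow> b \<in> P \<Longrightarrow> admissible m (P - {b}) (V - {a})"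
  and admissible_insert: "admissible m (insert (Suc m) P) (insert (Suc m) V)"
  using admissible Suc_notin_dom Suc_notin_ran by (auto simp: admissible_def)

end

lemma pending_poly_0:
  assumes "admissible 0 P V"
  shows "pending_poly 0 P V = (if card V = 0 then 1 else 0)"
proof (cases "card V = 0")
  case True
  then have "P = {}" "V = {}"
    using assms by (auto simp: admissible_def)
  then show ?thesis
    by (simp add: pending_poly_def pending_bij_empty crossings_def)
next
  case False
  then have "P \<noteq> {}"
    using assms by (auto simp: admissible_def)
  then have "pending_bij 0 P V = {}"
    by (auto simp: pending_bij_def)
  then show ?thesis
    using False by (simp add: pending_poly_def)
qed

lemma monom_of_nat: "monom (int c) k = of_nat c * monom 1 k"
  by (simp add: of_nat_poly smult_monom)

theorem pending_poly_eq_depth_motzkin: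
  "admissible n P V \<Longrightarrow> pending_poly n P V = depth_motzkin n (card V)"
proof (induction n arbitrary: P V)
  case 0
  then show ?case
    by (simp add: pending_poly_0 depth_motzkin_def)
next
  case (Suc m)
  interpret pending_step m P V
    by unfold_locales (rule Suc.prems)
  let ?h = "card V"
  have "(\<Sum>a\<in>V. \<Sum>b\<in>P. pending_poly m (P - {b}) (V - {a})) = (\<Sum>a\<in>V. \<Sum>b\<in>P. depth_motzkin m (?h - 1))"
    using Suc.IH[OF admissible_remove] finite_V by (intro sum.cong refl) simp
  then have "pending_poly (Suc m) P V = monom 1 ?h * (of_nat (2 * ?h + 1) * depth_motzkin m ?h
      + of_nat (?h * ?h) * depth_motzkin m (?h - 1) + depth_motzkin m (Suc ?h))"
    using Suc.IH[OF admissible_same] Suc.IH[OF admissible_insert] card_P finite_V Suc_notin_ran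
    by (simp add: pending_poly_Suc algebra_simps)
  moreover have "depth_motzkin (Suc m) ?h = of_nat (?h * ?h) * monom 1 ?h * depth_motzkin m (?h - 1)
      + of_nat (2 * ?h + 1) * monom 1 ?h * depth_motzkin m ?h + monom 1 ?h * depth_motzkin m (Suc ?h)"
    unfolding depth_motzkin_def motzkin_sum.simps monom_of_nat by (simp only: mult.assoc)
  ultimately show ?case
    by (simp add: algebra_simps)
qed

lemma depPoly_eq_depth_motzkin: "depPoly n = depth_motzkin n 0"
  using pending_poly_eq_depth_motzkin[of n "{}" "{}"] by (simp add: depPoly_eq_pending_poly admissible_def)

section \<open>The depth generating function\<close>

lemma cS_level: "(if h = 0 then 0 else cS (2*h - 1)) + cS (2*h) = monom (int (2*h + 1)) h"
proof (cases h)
  case 0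
  then show ?thesis by (simp add: cS_def)
next
  case (Suc k)
  then show ?thesis by (auto simp: cS_def poly_eq_iff)
qed

lemma cS_pair: "cS (2*h) * cS (Suc (2*h)) = monom (int (Suc h * Suc h)) (Suc h) * monom 1 h"
  by (simp add: cS_def mult_monom algebra_simps)

lemma Sfrac_lim_cS_nth: "Sfrac_lim cS 0 $ n = emb (depth_motzkin n 0)"
proof -
  have "Sfrac_lim cS 0 $ n = motzkin_sum (\<lambda>h. emb (monom (int (h * h)) h))
          (\<lambda>h. emb (monom (int (2*h + 1)) h)) (\<lambda>h. emb (monom 1 h)) n 0"
  proof (rule S_fraction_nth_motzkin_sum[where d = "\<lambda>i. emb (cS i)"])
    show "Sfrac_lim cS i = 1 + fps_const (emb (cS i)) * fps_X * Sfrac_lim cS (Suc i) * Sfrac_lim cS i"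
      for i by (rule Sfrac_lim_rec)
    show "emb (monom (int (2*h + 1)) h) = (if h = 0 then 0 else emb (cS (2*h - 1))) + emb (cS (2*h))"
      for h by (subst cS_level[symmetric]) (simp add: Zero_fract_def)
    show "emb (cS (2*h)) * emb (cS (Suc (2*h)))
            = emb (monom (int (Suc h * Suc h)) (Suc h)) * emb (monom 1 h)"
      for h by (simp only: mult_fract mult_1_left cS_pair)
  qed (simp add: Zero_fract_def)
  then show ?thesis
    by (simp add: depth_motzkin_def motzkin_sum_Fract)
qed

theorem mainTheorem5:
  shows "(\<lambda>m. Sfrac cS m 0) \<longlonglongrightarrow> F"
proof -
  have "Sfrac_lim cS 0 = F"
    by (rule fps_ext) (simp add: Sfrac_lim_cS_nth F_def depPoly_eq_depth_motzkin)
  then show ?thesis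
    using Sfrac_tendsto_Sfrac_lim[of cS 0] by simp
qed

end
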